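(* Let $n\ge 2$ and let $m,p,k$ be integers with $1\le m\le p\le n$, $1\le k\le n$ and $m<n$. The number of $\alpha\in\mathcal{ODCT}_n$ with $h(\alpha)=p$, $w^+(\alpha)=k$ and $f(\alpha)=m$ is $$F(n;p,k,m)=\begin{cases}\binom{n-m-1}{p-m}, & p=k,\\ 0, & p\ne k.\end{cases}$$
   Context: $X_n=\{1,2,\dots,n\}$ with its usual order; maps are written on the right ($x\alpha$). A map $\alpha:X_n\to X_n$ is order-preserving if $x\le y$ implies $x\alpha\le y\alpha$, order-decreasing if $x\alpha\le x$ for all $x$, and a contraction if $|x\alpha-y\alpha|\le|x-y|$ for all $x,y$. $\mathcal{ODCT}_n$ is the set of all maps $X_n\to X_n$ (defined on all of $X_n$) that are order-preserving, order-decreasing contractions. Height $h(\alpha)=|\mathrm{Im}\,\alpha|$; right waist $w^+(\alpha)=\max(\mathrm{Im}\,\alpha)$; fix $f(\alpha)=|\{x\in X_n:x\alpha=x\}|$. Binomial coefficients $\binom{a}{b}$ with $b>a\ge0$ are $0$. *)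

theory Defs
  imports "HOL-Library.FuncSet"
begin

text \<open>Full transformations of X_n = {1..n}, represented as extensional functions
  (value undefined outside {1..n}).\<close>

definition ODCT :: "nat \<Rightarrow> (nat \<Rightarrow> nat) set" where
  "ODCT n = {\<alpha> \<in> {1..n} \<rightarrow>\<^sub>E {1..n}.
      (\<forall>x\<in>{1..n}. \<forall>y\<in>{1..n}. x \<le> y \<longrightarrow> \<alpha> x \<le> \<alpha> y) \<and>
      (\<forall>x\<in>{1..n}. \<alpha> x \<le> x) \<and>
      (\<forall>x\<in>{1..n}. \<forall>y\<in>{1..n}. \<bar>int (\<alpha> x) - int (\<alpha> y)\<bar> \<le> \<bar>int x - int y\<bar>)}"

definition height :: "nat \<Rightarrow> (nat \<Rightarrow> nat) \<Rightarrow> nat" where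
  "height n \<alpha> = card (\<alpha> ` {1..n})"

definition right_waist :: "nat \<Rightarrow> (nat \<Rightarrow> nat) \<Rightarrow> nat" where
  "right_waist n \<alpha> = Max (\<alpha> ` {1..n})"

definition fix_count :: "nat \<Rightarrow> (nat \<Rightarrow> nat) \<Rightarrow> nat" where
  "fix_count n \<alpha> = card {x \<in> {1..n}. \<alpha> x = x}"

end

theory Submission
  imports Defs
begin

text \<open>A map in \<open>ODCT n\<close> starts at \<open>1 \<alpha> = 1\<close> and, being an order-preserving contraction, rises
  by \<open>0\<close> or \<open>1\<close> at each step; so it is determined by its set of rises \<open>U \<subseteq> {2..n}\<close> via
  \<open>x \<alpha> = 1 + |U \<inter> [1,x]|\<close>, and every such \<open>U\<close> occurs. Both height and right waist equal
  \<open>|U| + 1\<close>, and \<open>x\<close> is fixed iff \<open>{2..x} \<subseteq> U\<close>. Hence for \<open>m < n\<close> the condition \<open>f(\<alpha>) = m\<close>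
  says \<open>{2..m} \<subseteq> U\<close> and \<open>m + 1 \<notin> U\<close>, leaving \<open>p - m\<close> rises to choose freely in \<open>{m+2..n}\<close>.\<close>

lemma card_Int_atMost_Suc:
  "card (U \<inter> {..Suc x}) = card (U \<inter> {..x}) + (if Suc x \<in> U then 1 else 0)"
proof -
  have "U \<inter> {..Suc x} = (if Suc x \<in> U then insert (Suc x) (U \<inter> {..x}) else U \<inter> {..x})"
    by (auto simp: le_Suc_eq)
  then show ?thesis by auto
qed

lemma card_Int_atMost_mono:
  "(x::nat) \<le> y \<Longrightarrow> card (U \<inter> {..x}) \<le> card (U \<inter> {..y})"
  by (intro card_mono) auto

lemma card_Int_atMost_le_add_diff:
  assumes "(x::nat) \<le> y"
  shows "card (U \<inter> {..y}) \<le> card (U \<inter> {..x}) + (y - x)"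
  using assms
proof (induction y rule: dec_induct)
  case (step y)
  then show ?case using card_Int_atMost_Suc[of U y] by (simp add: Suc_diff_le)
qed simp

lemma finite_down_closed_eq_atLeastAtMost_card:
  fixes F :: "nat set"
  assumes "finite F" "F \<subseteq> {1..}" and down: "\<And>x y. x \<in> F \<Longrightarrow> 1 \<le> y \<Longrightarrow> y \<le> x \<Longrightarrow> y \<in> F"
  shows "F = {1..card F}"
proof (cases "F = {}")
  case False
  define M where "M = Max F"
  have "M \<in> F" "\<forall>x\<in>F. x \<le> M"
    using False \<open>finite F\<close> by (simp_all add: M_def)
  then have "F = {1..M}"
    using \<open>F \<subseteq> {1..}\<close> by (auto intro: down)
  then show ?thesis by simp
qed simp

lemma card_supersets_of_card:
  assumes "finite A" "finite B" "A \<inter> B = {}"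
  shows "card {U. A \<subseteq> U \<and> U \<subseteq> A \<union> B \<and> card U = card A + j} = card B choose j"
proof -
  have "bij_betw (\<lambda>V. V \<union> A) {V. V \<subseteq> B \<and> card V = j}
          {U. A \<subseteq> U \<and> U \<subseteq> A \<union> B \<and> card U = card A + j}"
  proof (rule bij_betw_byWitness[where f' = "\<lambda>U. U - A"])
    show "(\<lambda>V. V \<union> A) ` {V. V \<subseteq> B \<and> card V = j}
            \<subseteq> {U. A \<subseteq> U \<and> U \<subseteq> A \<union> B \<and> card U = card A + j}"
    proof (rule image_subsetI)
      fix V assume "V \<in> {V. V \<subseteq> B \<and> card V = j}"
      then have "V \<subseteq> B" "card V = j" by auto
      moreover have "card (V \<union> A) = card V + card A"
        using assms \<open>V \<subseteq> B\<close> by (intro card_Un_disjoint) (auto simp: finite_subset)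
      ultimately show "V \<union> A \<in> {U. A \<subseteq> U \<and> U \<subseteq> A \<union> B \<and> card U = card A + j}"
        by auto
    qed
    show "(\<lambda>U. U - A) ` {U. A \<subseteq> U \<and> U \<subseteq> A \<union> B \<and> card U = card A + j}
            \<subseteq> {V. V \<subseteq> B \<and> card V = j}"
      using assms by (auto simp: card_Diff_subset finite_subset)
  qed (use assms in auto)
  then show ?thesis
    using bij_betw_same_card n_subsets[OF \<open>finite B\<close>] by fastforce
qed

lemma card_subsets_with_prefix_and_gap:
  assumes "1 \<le> m" "m \<le> p" "m < n"
  shows "card {U \<in> Pow {2..n}. card U + 1 = p \<and> {2..m} \<subseteq> U \<and> Suc m \<notin> U}
         = (n - m - 1) choose (p - m)"
proof -
  have split: "{2..m} \<union> {m+2..n} = {2..n} - {Suc m}"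
    and size: "card {2..m} + (p - m) = p - 1"
    using assms by auto
  have "{U \<in> Pow {2..n}. card U + 1 = p \<and> {2..m} \<subseteq> U \<and> Suc m \<notin> U}
      = {U. {2..m} \<subseteq> U \<and> U \<subseteq> {2..n} - {Suc m} \<and> card U = p - 1}"
    using assms by auto
  also have "\<dots> = {U. {2..m} \<subseteq> U \<and> U \<subseteq> {2..m} \<union> {m+2..n} \<and> card U = card {2..m} + (p - m)}"
    by (simp only: split size)
  finally show ?thesis
    using card_supersets_of_card[of "{2..m}" "{m+2..n}" "p - m"] by simp
qed

lemma ODCT_D:
  assumes "\<alpha> \<in> ODCT n"
  shows ODCT_PiE: "\<alpha> \<in> {1..n} \<rightarrow>\<^sub>E {1..n}"
    and ODCT_mono: "\<lbrakk>x \<in> {1..n}; y \<in> {1..n}; x \<le> y\<rbrakk> \<Longrightarrow> \<alpha> x \<le> \<alpha> y"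
    and ODCT_decreasing: "x \<in> {1..n} \<Longrightarrow> \<alpha> x \<le> x"
    and ODCT_contraction:
      "\<lbrakk>x \<in> {1..n}; y \<in> {1..n}\<rbrakk> \<Longrightarrow> \<bar>int (\<alpha> x) - int (\<alpha> y)\<bar> \<le> \<bar>int x - int y\<bar>"
  using assms by (simp_all add: ODCT_def)

lemma ODCT_rise_or_stay:
  assumes "\<alpha> \<in> ODCT n" "1 \<le> x" "Suc x \<le> n"
  shows "\<alpha> (Suc x) = \<alpha> x \<or> \<alpha> (Suc x) = Suc (\<alpha> x)"
proof -
  have "x \<in> {1..n}" "Suc x \<in> {1..n}" using assms by auto
  then have "\<alpha> x \<le> \<alpha> (Suc x)" "\<bar>int (\<alpha> (Suc x)) - int (\<alpha> x)\<bar> \<le> 1"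
    using ODCT_mono[OF assms(1)] ODCT_contraction[OF assms(1)] by fastforce+
  then show ?thesis by linarith
qed

definition rises :: "nat \<Rightarrow> (nat \<Rightarrow> nat) \<Rightarrow> nat set" where
  "rises n \<alpha> = {y \<in> {2..n}. \<alpha> y = Suc (\<alpha> (y - 1))}"

definition odct_of_rises :: "nat \<Rightarrow> nat set \<Rightarrow> nat \<Rightarrow> nat" where
  "odct_of_rises n U = (\<lambda>x. if x \<in> {1..n} then 1 + card (U \<inter> {..x}) else undefined)"

lemma odct_of_rises_in_ODCT:
  assumes "U \<subseteq> {2..n}"
  shows "odct_of_rises n U \<in> ODCT n"
proof -
  let ?\<alpha> = "odct_of_rises n U"
  have below: "card (U \<inter> {..x}) \<le> x - 1" for x
  proof -
    have "card (U \<inter> {..x}) \<le> card {2..x}" using assms by (intro card_mono) auto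
    then show ?thesis by simp
  qed
  have "?\<alpha> \<in> {1..n} \<rightarrow>\<^sub>E {1..n}"
  proof (rule PiE_I)
    show "?\<alpha> x \<in> {1..n}" if "x \<in> {1..n}" for x
      using that below[of x] by (auto simp: odct_of_rises_def)
  qed (auto simp: odct_of_rises_def)
  moreover have "\<forall>x\<in>{1..n}. \<forall>y\<in>{1..n}. x \<le> y \<longrightarrow> ?\<alpha> x \<le> ?\<alpha> y"
    using card_Int_atMost_mono by (auto simp: odct_of_rises_def)
  moreover have "\<forall>x\<in>{1..n}. ?\<alpha> x \<le> x"
  proof
    show "?\<alpha> x \<le> x" if "x \<in> {1..n}" for x
      using that below[of x] by (auto simp: odct_of_rises_def)
  qed
  moreover have "\<bar>int (?\<alpha> x) - int (?\<alpha> y)\<bar> \<le> \<bar>int x - int y\<bar>"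
    if "x \<in> {1..n}" "y \<in> {1..n}" "x \<le> y" for x y
    using that card_Int_atMost_mono[OF \<open>x \<le> y\<close>, of U]
      card_Int_atMost_le_add_diff[OF \<open>x \<le> y\<close>, of U]
    by (simp add: odct_of_rises_def)
  then have "\<forall>x\<in>{1..n}. \<forall>y\<in>{1..n}. \<bar>int (?\<alpha> x) - int (?\<alpha> y)\<bar> \<le> \<bar>int x - int y\<bar>"
    by (metis abs_minus_commute nat_le_linear)
  ultimately show ?thesis unfolding ODCT_def by blast
qed

lemma rises_odct_of_rises:
  assumes "U \<subseteq> {2..n}"
  shows "rises n (odct_of_rises n U) = U"
proof -
  have "y \<in> rises n (odct_of_rises n U) \<longleftrightarrow> y \<in> U" if "y \<in> {2..n}" for y
    using that card_Int_atMost_Suc[of U "y - 1"] by (auto simp: rises_def odct_of_rises_def)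
  then show ?thesis using assms by (auto simp: rises_def)
qed

lemma odct_of_rises_rises:
  assumes "\<alpha> \<in> ODCT n"
  shows "odct_of_rises n (rises n \<alpha>) = \<alpha>"
proof -
  have alpha_eq: "\<alpha> x = 1 + card (rises n \<alpha> \<inter> {..x})" if "1 \<le> x" "x \<le> n" for x
    using that
  proof (induction x rule: dec_induct)
    case base
    have "\<alpha> 1 \<in> {1..n}" "\<alpha> 1 \<le> 1"
      using base ODCT_PiE[OF assms] ODCT_decreasing[OF assms, of 1] by (auto simp: PiE_iff)
    moreover have "rises n \<alpha> \<inter> {..1} = {}" by (auto simp: rises_def)
    ultimately show ?case by simp
  next
    case (step x)
    have "Suc x \<in> rises n \<alpha> \<longleftrightarrow> \<alpha> (Suc x) = Suc (\<alpha> x)"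
      using step.hyps step.prems by (auto simp: rises_def)
    moreover have "\<alpha> (Suc x) = \<alpha> x \<or> \<alpha> (Suc x) = Suc (\<alpha> x)"
      using ODCT_rise_or_stay[OF assms step.hyps(1) step.prems] .
    ultimately show ?case
      using step.IH step.prems card_Int_atMost_Suc[of "rises n \<alpha>" x] by auto
  qed
  have "\<alpha> \<in> extensional {1..n}"
    using ODCT_PiE[OF assms] by (simp add: PiE_iff)
  then show ?thesis
    using alpha_eq by (auto simp: odct_of_rises_def extensional_def)
qed

lemma bij_betw_odct_of_rises: "bij_betw (odct_of_rises n) (Pow {2..n}) (ODCT n)"
proof (rule bij_betw_byWitness[where f' = "rises n"])
  show "\<forall>U\<in>Pow {2..n}. rises n (odct_of_rises n U) = U"
    using rises_odct_of_rises by blast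
  show "\<forall>\<alpha>\<in>ODCT n. odct_of_rises n (rises n \<alpha>) = \<alpha>"
    using odct_of_rises_rises by blast
  show "odct_of_rises n ` Pow {2..n} \<subseteq> ODCT n"
    using odct_of_rises_in_ODCT by blast
  show "rises n ` ODCT n \<subseteq> Pow {2..n}"
    by (auto simp: rises_def)
qed

lemma height_odct_of_rises:
  assumes "U \<subseteq> {2..n}" "1 \<le> n"
  shows "height n (odct_of_rises n U) = card U + 1"
proof -
  let ?\<alpha> = "odct_of_rises n U"
  have "finite U" using assms finite_subset by blast
  have "1 \<notin> U" "insert 1 U \<subseteq> {1..n}" using assms by auto
  have "?\<alpha> ` {1..n} \<subseteq> {1..card U + 1}"
    using card_mono[OF \<open>finite U\<close>] by (auto simp: odct_of_rises_def)
  then have upper: "card (?\<alpha> ` {1..n}) \<le> card U + 1"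
    using card_mono[OF finite_atLeastAtMost] by (metis card_atLeastAtMost diff_Suc_1)
  have "strict_mono_on (insert 1 U) ?\<alpha>"
  proof (rule strict_mono_onI)
    fix u v assume "u \<in> insert 1 U" "v \<in> insert 1 U" "u < v"
    have "v \<in> U" using \<open>u \<in> insert 1 U\<close> \<open>v \<in> insert 1 U\<close> \<open>u < v\<close> assms by auto
    then have "U \<inter> {..u} \<subseteq> U \<inter> {..v}" "v \<in> U \<inter> {..v} - U \<inter> {..u}"
      using \<open>u < v\<close> by auto
    then have "U \<inter> {..u} \<subset> U \<inter> {..v}" by blast
    then have "card (U \<inter> {..u}) < card (U \<inter> {..v})" by (intro psubset_card_mono) auto
    then show "?\<alpha> u < ?\<alpha> v"
      using \<open>u \<in> insert 1 U\<close> \<open>v \<in> insert 1 U\<close> \<open>insert 1 U \<subseteq> {1..n}\<close>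
      by (auto simp: odct_of_rises_def)
  qed
  then have "inj_on ?\<alpha> (insert 1 U)"
    by (rule strict_mono_on_imp_inj_on)
  then have "card U + 1 = card (?\<alpha> ` insert 1 U)"
    using \<open>finite U\<close> \<open>1 \<notin> U\<close> by (simp add: card_image)
  also have "\<dots> \<le> card (?\<alpha> ` {1..n})"
    using \<open>insert 1 U \<subseteq> {1..n}\<close> by (intro card_mono) auto
  finally show ?thesis using upper unfolding height_def by simp
qed

lemma right_waist_odct_of_rises:
  assumes "U \<subseteq> {2..n}" "1 \<le> n"
  shows "right_waist n (odct_of_rises n U) = card U + 1"
proof -
  have "finite U" using assms finite_subset by blast
  have "U \<inter> {..n} = U" using assms by auto
  then have "odct_of_rises n U n = card U + 1" using assms by (simp add: odct_of_rises_def)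
  then have "card U + 1 \<in> odct_of_rises n U ` {1..n}"
    using assms by (metis atLeastAtMost_iff order_refl rev_image_eqI)
  moreover have "y \<le> card U + 1" if "y \<in> odct_of_rises n U ` {1..n}" for y
    using that card_mono[OF \<open>finite U\<close>] by (auto simp: odct_of_rises_def)
  ultimately show ?thesis unfolding right_waist_def by (intro Max_eqI) auto
qed

lemma fixed_points_odct_of_rises:
  assumes "U \<subseteq> {2..n}"
  shows "{x \<in> {1..n}. odct_of_rises n U x = x} = {x \<in> {1..n}. {2..x} \<subseteq> U}"
proof -
  have "odct_of_rises n U x = x \<longleftrightarrow> {2..x} \<subseteq> U" if "x \<in> {1..n}" for x
  proof -
    have "U \<inter> {..x} \<subseteq> {2..x}" using assms by auto
    then have "card (U \<inter> {..x}) = card {2..x} \<longleftrightarrow> U \<inter> {..x} = {2..x}"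
      by (metis card_subset_eq finite_atLeastAtMost)
    also have "\<dots> \<longleftrightarrow> {2..x} \<subseteq> U" using assms by auto
    finally show ?thesis using that by (auto simp: odct_of_rises_def)
  qed
  then show ?thesis by auto
qed

lemma fix_count_odct_of_rises_eq_iff:
  assumes "U \<subseteq> {2..n}" "1 \<le> m" "m < n"
  shows "fix_count n (odct_of_rises n U) = m \<longleftrightarrow> {2..m} \<subseteq> U \<and> Suc m \<notin> U"
proof -
  define F where "F = {x \<in> {1..n}. {2..x} \<subseteq> U}"
  have "F = {1..card F}"
    by (rule finite_down_closed_eq_atLeastAtMost_card) (auto simp: F_def)
  then have "card F = m \<longleftrightarrow> F = {1..m}"
    by (metis card_atLeastAtMost diff_Suc_1)
  also have "\<dots> \<longleftrightarrow> {2..m} \<subseteq> U \<and> Suc m \<notin> U"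
  proof
    assume "F = {1..m}"
    then have "m \<in> F" "Suc m \<notin> F" using assms by auto
    then show "{2..m} \<subseteq> U \<and> Suc m \<notin> U"
      using assms by (auto simp: F_def atLeastAtMostSuc_conv)
  next
    assume rises_below: "{2..m} \<subseteq> U \<and> Suc m \<notin> U"
    show "F = {1..m}"
    proof (intro equalityI subsetI)
      fix x assume "x \<in> F"
      then have "{2..x} \<subseteq> U" "1 \<le> x" by (auto simp: F_def)
      then have "Suc m \<notin> {2..x}" using rises_below by blast
      then show "x \<in> {1..m}" using \<open>1 \<le> x\<close> \<open>1 \<le> m\<close> by simp
    next
      fix x assume "x \<in> {1..m}"
      then show "x \<in> F" using rises_below assms by (auto simp: F_def)
    qed
  qed
  finally show ?thesis
    using fixed_points_odct_of_rises[OF assms(1)] by (simp add: fix_count_def F_def)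
qed

theorem proposition4p1:
  fixes n m p k :: nat
  assumes "n \<ge> 2" and "1 \<le> m" and "m \<le> p" and "p \<le> n"
    and "1 \<le> k" and "k \<le> n" and "m < n"
  shows "card {\<alpha> \<in> ODCT n. height n \<alpha> = p \<and> right_waist n \<alpha> = k \<and> fix_count n \<alpha> = m}
         = (if p = k then (n - m - 1) choose (p - m) else 0)"
proof -
  let ?P = "\<lambda>\<alpha>. height n \<alpha> = p \<and> right_waist n \<alpha> = k \<and> fix_count n \<alpha> = m"
  let ?Q = "\<lambda>U. card U + 1 = p \<and> card U + 1 = k \<and> {2..m} \<subseteq> U \<and> Suc m \<notin> U"
  have P_iff_Q: "?P (odct_of_rises n U) \<longleftrightarrow> ?Q U" if "U \<in> Pow {2..n}" for U
  proof -
    have "U \<subseteq> {2..n}" "1 \<le> n" using that assms by auto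
    then show ?thesis
      by (simp only: height_odct_of_rises right_waist_odct_of_rises
          fix_count_odct_of_rises_eq_iff[OF _ \<open>1 \<le> m\<close> \<open>m < n\<close>])
  qed
  have "bij_betw (odct_of_rises n) {U \<in> Pow {2..n}. ?Q U} {\<alpha> \<in> ODCT n. ?P \<alpha>}"
    by (rule bij_betw_Collect[OF bij_betw_odct_of_rises, where P = ?Q and Q = ?P])
      (rule P_iff_Q)
  then have count: "card {\<alpha> \<in> ODCT n. ?P \<alpha>} = card {U \<in> Pow {2..n}. ?Q U}"
    by (simp add: bij_betw_same_card)
  show ?thesis
  proof (cases "p = k")
    case True
    then have "{U \<in> Pow {2..n}. ?Q U}
        = {U \<in> Pow {2..n}. card U + 1 = p \<and> {2..m} \<subseteq> U \<and> Suc m \<notin> U}"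
      by auto
    then show ?thesis
      using count True card_subsets_with_prefix_and_gap[OF \<open>1 \<le> m\<close> \<open>m \<le> p\<close> \<open>m < n\<close>]
      by simp
  next
    case False
    then have "{U \<in> Pow {2..n}. ?Q U} = {}" by auto
    then show ?thesis using count False by simp
  qed
qed

end
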